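(* Consider the genus 2 setting described in the context (curve $y^2=x^5+p_2x^3+p_3x^2+p_4x+p_5$, Lax operator $L$ in Tyurin parametrization with gauge $\alpha_3=(1,0)^T$, $\alpha_4=(0,1)^T$, and Hamiltonian $H$). Let $Z$ be the subvariety of the phase space defined by $$\alpha_{11}=\alpha_{22}=0,\qquad \beta_{11}=\beta_{21}=\beta_{12}=\beta_{22}=\beta_{23}=\beta_{14}=0.$$ Then $Z$ is invariant under the Hamiltonian flow of $H$: at every point of $Z$ (where defined) one has $\partial H/\partial\beta_{11}=\partial H/\partial\beta_{22}=0$ and $\partial H/\partial\alpha_{ij}=0$ for $(i,j)\in\{(1,1),(2,1),(1,2),(2,2)\}$. The restriction of $H$ to $Z$ equals $$H^{(r)}=\frac{2(\kappa_1-\kappa_4)(a_4\kappa_1-a_1\kappa_4)}{(a_1-a_4)^2}+\frac{2(\kappa_2-\kappa_3)(a_3\kappa_2-a_2\kappa_3)}{(a_2-a_3)^2},$$ and on $Z$ the Hamiltonian equations take the form $$\dot a_1=-\frac{2(a_1\kappa_4+a_4(\kappa_4-2\kappa_1))}{(a_1-a_4)^2},\quad \dot a_4=-\frac{2(a_4\kappa_1+a_1(\kappa_1-2\kappa_4))}{(a_1-a_4)^2},\quad \dot\kappa_1=\frac{\kappa_1-\kappa_4}{a_1-a_4}\dot a_1,\quad \dot\kappa_4=\frac{\kappa_1-\kappa_4}{a_1-a_4}\dot a_4,$$ $$\dot a_2=-\frac{2(a_2\kappa_3+a_3(\kappa_3-2\kappa_2))}{(a_2-a_3)^2},\quad \dot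 a_3=-\frac{2(a_3\kappa_2+a_2(\kappa_2-2\kappa_3))}{(a_2-a_3)^2},\quad \dot\kappa_2=\frac{\kappa_2-\kappa_3}{a_2-a_3}\dot a_2,\quad \dot\kappa_3=\frac{\kappa_2-\kappa_3}{a_2-a_3}\dot a_3,$$ $$\dot\alpha_{12}=\alpha_{12}\frac{b_2+b_3}{a_2-a_3}\dot a_3,\qquad \dot\alpha_{21}=\alpha_{21}\frac{b_1+b_4}{a_1-a_4}\dot a_4 .$$ In particular, the first eight equations form the Hamiltonian system with Hamiltonian $H^{(r)}$ in the canonical coordinates $(a_s,\kappa_s)_{s=1}^4$.
   Context: Let $\Sigma$ be the genus 2 hyperelliptic curve $y^2=P(x)=x^5+p_2x^3+p_3x^2+p_4x+p_5$ (i.e. the coefficient $p_1$ of $x^4$ is $0$), with $p_2,\dots,p_5\in\mathbb{C}$. Dynamical variables: points $(a_s,b_s)\in\Sigma$, $s=1,\dots,4$, with pairwise distinct $a_s$ (each $b_s$ is regarded as a local branch of $\sqrt{P(a_s)}$, hence a function of $a_s$); numbers $\kappa_1,\dots,\kappa_4$; vectors $\alpha_1=(\alpha_{11},\alpha_{21})^T$, $\alpha_2=(\alpha_{12},\alpha_{22})^T$, $\beta_1=(\beta_{11},\beta_{21})^T$, $\beta_2=(\beta_{12},\beta_{22})^T$, $\beta_3=(0,\beta_{23})^T$, $\beta_4=(\beta_{14},0)^T$, and the gauge-fixed vectors $\alpha_3=(1,0)^T$, $\alpha_4=(0,1)^T$. The Lax operator is $$L(x,y)=A_0+A_1x+\sum_{s=1}^4\alpha_s\beta_s^T\frac{y+b_s}{x-a_s},$$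 where the $2\times2$ matrices $A_0,A_1$ are determined (as rational functions of the remaining variables, for generic values) by the eight scalar linear equations $L(a_s,b_s)\alpha_s=\kappa_s\alpha_s$, $s=1,\dots,4$, in which, in $L(a_s,b_s)$, the singular summand with index $s$ is omitted. Near $x=\infty$ use the local parameter $z$ with $x=z^{-2}$, $y=z^{-5}(1+p_2z^4+p_3z^6+p_4z^8+p_5z^{10})^{1/2}$ (branch equal to $1$ at $z=0$). The Hamiltonian is $$H=-\operatorname{res}_{z=0}\, z^{-4}\,y(z)^{-1}\,\operatorname{tr}\big(L(x(z),y(z))^2\big)\,dz \;=\;\tfrac12\operatorname{res}_{z=0} z^{-1}\operatorname{tr}L^2\,\frac{dx}{y}.$$ The Hamiltonian equations are $\dot a_s=\partial H/\partial\kappa_s$, $\dot\kappa_s=-\partial H/\partial a_s$ ($s=1,\dots,4$, with $b_s$ differentiated as a function of $a_s$), $\dot\alpha_{ij}=\partial H/\partial\beta_{ij}$, $\dot\beta_{ij}=-\partial H/\partial\alpha_{ij}$ for $(i,j)\in\{(1,1),(2,1),(1,2),(2,2)\}$, and $\dot\beta_{23}=\dot\beta_{14}=0$ (their conjugate variables are fixed by the gauge and $H$ does not depend on them). *)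

theory Defs
  imports "HOL-Analysis.Analysis" "HOL-Computational_Algebra.Formal_Laurent_Series"
begin

definition Pc :: "complex \<Rightarrow> complex \<Rightarrow> complex \<Rightarrow> complex \<Rightarrow> complex \<Rightarrow> complex" where
  "Pc p2 p3 p4 p5 x = x^5 + p2 * x^3 + p3 * x^2 + p4 * x + p5"

text \<open>Points of the phase space. The indices s = 1..4 of a_s, b_s, kappa_s are the
  natural numbers 1..4 (values at other indices are irrelevant).  The fields alIJ / beIJ
  are alpha_{IJ} / beta_{IJ}.\<close>
record phase =
  pa   :: "nat \<Rightarrow> complex"
  pb   :: "nat \<Rightarrow> complex"
  kap  :: "nat \<Rightarrow> complex"
  al11 :: complex
  al21 :: complex
  al12 :: complex
  al22 :: complex
  be11 :: complex
  be21 :: complex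
  be12 :: complex
  be22 :: complex
  be23 :: complex
  be14 :: complex

definition alphaV :: "phase \<Rightarrow> nat \<Rightarrow> complex^2" where
  "alphaV st s =
     (if s = 1 then vector [al11 st, al21 st]
      else if s = 2 then vector [al12 st, al22 st]
      else if s = 3 then vector [1, 0]
      else vector [0, 1])"

definition betaV :: "phase \<Rightarrow> nat \<Rightarrow> complex^2" where
  "betaV st s =
     (if s = 1 then vector [be11 st, be21 st]
      else if s = 2 then vector [be12 st, be22 st]
      else if s = 3 then vector [0, be23 st]
      else vector [be14 st, 0])"

definition outer :: "'a::times^'n \<Rightarrow> 'a^'m \<Rightarrow> 'a^'m^'n" where
  "outer u v = (\<chi> i j. u $ i * v $ j)"

definition smat :: "'a::times \<Rightarrow> 'a^'m^'n \<Rightarrow> 'a^'m^'n" where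
  "smat c M = (\<chi> i j. c * M $ i $ j)"

text \<open>L(a_s,b_s) with the singular summand of index s omitted.\<close>
definition lax_at :: "phase \<Rightarrow> complex^2^2 \<Rightarrow> complex^2^2 \<Rightarrow> nat \<Rightarrow> complex^2^2" where
  "lax_at st A0 A1 s =
     A0 + smat (pa st s) A1 +
     (\<Sum>t\<in>{1..4} - {s}. smat ((pb st s + pb st t) / (pa st s - pa st t))
                                (outer (alphaV st t) (betaV st t)))"

definition lax_eqs :: "phase \<Rightarrow> complex^2^2 \<Rightarrow> complex^2^2 \<Rightarrow> bool" where
  "lax_eqs st A0 A1 \<longleftrightarrow>
     (\<forall>s\<in>{1..4}. lax_at st A0 A1 s *v alphaV st s = kap st s *s alphaV st s)"

text \<open>(A_0, A_1) as determined by these equations (meaningful where the solution is unique).\<close>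
definition lax_solution :: "phase \<Rightarrow> (complex^2^2) \<times> (complex^2^2)" where
  "lax_solution st = (THE A. lax_eqs st (fst A) (snd A))"

text \<open>Local parameter z at infinity, as formal Laurent series in z:
  x = z^(-2),  y = z^(-5) (1 + p2 z^4 + p3 z^6 + p4 z^8 + p5 z^10)^(1/2), branch 1 at z = 0.\<close>
definition xz :: "complex fls" where
  "xz = fls_X_intpow (-2)"

definition yz :: "complex \<Rightarrow> complex \<Rightarrow> complex \<Rightarrow> complex \<Rightarrow> complex fls" where
  "yz p2 p3 p4 p5 = fls_X_intpow (-5) *
     fps_to_fls (fps_radical (\<lambda>_ _. 1) 2
       (1 + fps_const p2 * fps_X ^ 4 + fps_const p3 * fps_X ^ 6
          + fps_const p4 * fps_X ^ 8 + fps_const p5 * fps_X ^ 10))"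

definition laxz :: "complex \<Rightarrow> complex \<Rightarrow> complex \<Rightarrow> complex \<Rightarrow> phase \<Rightarrow>
                    complex^2^2 \<Rightarrow> complex^2^2 \<Rightarrow> complex fls^2^2" where
  "laxz p2 p3 p4 p5 st A0 A1 =
     (\<chi> i j. fls_const (A0 $ i $ j) + fls_const (A1 $ i $ j) * xz +
        (\<Sum>s\<in>{1..4}. fls_const (alphaV st s $ i * betaV st s $ j) *
            ((yz p2 p3 p4 p5 + fls_const (pb st s)) / (xz - fls_const (pa st s)))))"

definition Ham :: "complex \<Rightarrow> complex \<Rightarrow> complex \<Rightarrow> complex \<Rightarrow> phase \<Rightarrow> complex" where
  "Ham p2 p3 p4 p5 st =
     (let A = lax_solution st; L = laxz p2 p3 p4 p5 st (fst A) (snd A)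
      in - fls_residue (fls_X_intpow (-4) * inverse (yz p2 p3 p4 p5) * trace (L ** L)))"

definition Hr :: "(nat \<Rightarrow> complex) \<Rightarrow> (nat \<Rightarrow> complex) \<Rightarrow> complex" where
  "Hr a k =
     2 * (k 1 - k 4) * (a 4 * k 1 - a 1 * k 4) / (a 1 - a 4)^2
   + 2 * (k 2 - k 3) * (a 3 * k 2 - a 2 * k 3) / (a 2 - a 3)^2"

definition adot :: "(nat \<Rightarrow> complex) \<Rightarrow> (nat \<Rightarrow> complex) \<Rightarrow> nat \<Rightarrow> complex" where
  "adot a k s =
     (if s = 1 then - 2 * (a 1 * k 4 + a 4 * (k 4 - 2 * k 1)) / (a 1 - a 4)^2
      else if s = 4 then - 2 * (a 4 * k 1 + a 1 * (k 1 - 2 * k 4)) / (a 1 - a 4)^2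
      else if s = 2 then - 2 * (a 2 * k 3 + a 3 * (k 3 - 2 * k 2)) / (a 2 - a 3)^2
      else - 2 * (a 3 * k 2 + a 2 * (k 2 - 2 * k 3)) / (a 2 - a 3)^2)"

definition kdot :: "(nat \<Rightarrow> complex) \<Rightarrow> (nat \<Rightarrow> complex) \<Rightarrow> nat \<Rightarrow> complex" where
  "kdot a k s =
     (if s = 1 \<or> s = 4 then (k 1 - k 4) / (a 1 - a 4) * adot a k s
      else (k 2 - k 3) / (a 2 - a 3) * adot a k s)"

end

theory Submission
  imports Defs
begin

text \<open>At a point of Z, and along each coordinate line through it that matters, at most one beta_s is
  non-zero, so L = A0 + A1 x + K (y + b)/(x - a) with K = alpha beta^T of rank one.  Since
  z^-4 dz / y = z (1 + O(z^3)) dz, the residue gives H = -2 tr(A0 A1) - (beta^T alpha)^2 res(...), and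
  the last term is quadratic in the varied coordinate.  With the gauge alpha_3 = e1, alpha_4 = e2 and
  alpha_11 = 0 (resp. alpha_22 = 0) the eight linear equations force A(x) = A0 + x A1 to be lower
  (resp. upper) triangular, its diagonal entries being the lines through (a_2, kappa_2), (a_3, kappa_3)
  and through (a_1, kappa_1), (a_4, kappa_4), with kappa_4 (resp. kappa_3) shifted by a term linear in
  the varied beta.  So -2 tr(A0 A1) is H^(r) at shifted kappa, and every claimed derivative reduces to
  one of H^(r).  Uniqueness of (A0, A1) is what forces alpha_21 and alpha_12 to be non-zero.\<close>

no_notation fps_nth (infixl "$" 75)

section \<open>Expansion at infinity\<close>

lemma fps_square_root_nth_1_2:
  fixes f g :: "'a::field_char_0 fps"
  assumes "g ^ 2 = f" "fps_nth g 0 = 1" "fps_nth f 1 = 0" "fps_nth f 2 = 0"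
  shows "fps_nth g 1 = 0" "fps_nth g 2 = 0"
proof -
  have "fps_nth (g ^ 2) 1 = 2 * fps_nth g 1"
    using assms(2) by (simp add: power2_eq_square fps_mult_nth_1)
  with assms show g1: "fps_nth g 1 = 0" by simp
  have "fps_nth (g ^ 2) 2 = 2 * fps_nth g 2"
    using assms(2) g1 by (simp add: power2_eq_square fps_mult_nth numeral_2_eq_2)
  with assms show "fps_nth g 2 = 0" by simp
qed

lemma fps_inverse_nth_1:
  fixes f :: "'a::field fps"
  assumes "fps_nth f 0 = 1" "fps_nth f 1 = 0"
  shows "fps_nth (inverse f) 1 = 0"
proof -
  have "fps_nth (f * inverse f) 1 = fps_nth (inverse f) 1"
    using assms by (simp add: fps_mult_nth_1)
  then show ?thesis using assms(1) by (simp add: inverse_mult_eq_1')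
qed

lemma fps_inverse_nth_2:
  fixes f :: "'a::field fps"
  assumes "fps_nth f 0 = 1" "fps_nth f 1 = 0" "fps_nth f 2 = 0"
  shows "fps_nth (inverse f) 2 = 0"
proof -
  have "fps_nth (f * inverse f) 2 = fps_nth (inverse f) 2"
    using assms fps_inverse_nth_1[OF assms(1,2)] by (simp add: fps_mult_nth numeral_2_eq_2)
  then show ?thesis using assms(1) by (simp add: inverse_mult_eq_1')
qed

definition y_root :: "complex \<Rightarrow> complex \<Rightarrow> complex \<Rightarrow> complex \<Rightarrow> complex fps" where
  "y_root p2 p3 p4 p5 = fps_radical (\<lambda>_ _. 1) 2
     (1 + fps_const p2 * fps_X ^ 4 + fps_const p3 * fps_X ^ 6 + fps_const p4 * fps_X ^ 8
        + fps_const p5 * fps_X ^ 10)"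

lemma y_root_nth:
  "fps_nth (y_root p2 p3 p4 p5) 0 = 1"
  "fps_nth (y_root p2 p3 p4 p5) 1 = 0"
  "fps_nth (y_root p2 p3 p4 p5) 2 = 0"
proof -
  define Q :: "complex fps" where "Q = 1 + fps_const p2 * fps_X ^ 4 + fps_const p3 * fps_X ^ 6
     + fps_const p4 * fps_X ^ 8 + fps_const p5 * fps_X ^ 10"
  have Q0: "fps_nth Q 0 = 1" by (simp add: Q_def)
  have "y_root p2 p3 p4 p5 ^ Suc 1 = Q"
    unfolding y_root_def Q_def[symmetric] numeral_2_eq_2 using power_radical[of Q "\<lambda>_ _. 1" 1] Q0 by simp
  then have sq: "y_root p2 p3 p4 p5 ^ 2 = Q" by (simp add: numeral_2_eq_2)
  show r0: "fps_nth (y_root p2 p3 p4 p5) 0 = 1" by (simp add: y_root_def)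
  show "fps_nth (y_root p2 p3 p4 p5) 1 = 0" "fps_nth (y_root p2 p3 p4 p5) 2 = 0"
    by (rule fps_square_root_nth_1_2[OF sq r0]; simp add: Q_def)+
qed

lemma yz_eq_shift_y_root: "yz p2 p3 p4 p5 = fls_shift 5 (fps_to_fls (y_root p2 p3 p4 p5))"
  by (simp add: yz_def y_root_def fls_shifted_times_simps)

lemma yz_nonzero: "yz p2 p3 p4 p5 \<noteq> 0"
proof
  assume "yz p2 p3 p4 p5 = 0"
  then have "fls_nth (yz p2 p3 p4 p5) (-5) = 0" by simp
  then show False by (simp add: yz_eq_shift_y_root y_root_nth)
qed

definition ham_weight :: "complex \<Rightarrow> complex \<Rightarrow> complex \<Rightarrow> complex \<Rightarrow> complex fls" where
  "ham_weight p2 p3 p4 p5 = fls_X_intpow (-4) * inverse (yz p2 p3 p4 p5)"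

lemma ham_weight_eq_shift:
  "ham_weight p2 p3 p4 p5 = fls_shift (-1) (fps_to_fls (inverse (y_root p2 p3 p4 p5)))"
  by (simp add: ham_weight_def yz_eq_shift_y_root fls_inverse_shift fls_inverse_fps_to_fls y_root_nth
      fls_X_intpow_times_conv_shift fls_shifted_times_simps)

lemma ham_weight_nth: "fls_nth (ham_weight p2 p3 p4 p5) 1 = 1" "fls_nth (ham_weight p2 p3 p4 p5) 3 = 0"
  "n \<le> 0 \<Longrightarrow> fls_nth (ham_weight p2 p3 p4 p5) n = 0"
  using fps_inverse_nth_2[OF y_root_nth]
  by (simp_all add: ham_weight_eq_shift y_root_nth)

lemma ham_weight_times_yz: "ham_weight p2 p3 p4 p5 * yz p2 p3 p4 p5 = fls_X_intpow (-4)"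
  using yz_nonzero by (simp add: ham_weight_def)

lemma xz_eq_shift: "xz = fls_shift 2 1"
  by (simp add: xz_def)

lemma inverse_xz_minus_const:
  "inverse (xz - fls_const a) = fls_shift (-2) (fps_to_fls (inverse (1 - fps_const a * fps_X ^ 2)))"
proof -
  have "xz - fls_const a = fls_shift 2 (fps_to_fls (1 - fps_const a * fps_X ^ 2))"
    by (rule fls_eqI) (auto simp: xz_eq_shift)
  then show ?thesis
    by (simp only: fls_inverse_shift) (subst fls_inverse_fps_to_fls; simp)
qed

lemma fls_residue_ham_weight_times_xz_power:
  "fls_residue (ham_weight p2 p3 p4 p5) = 0"
  "fls_residue (ham_weight p2 p3 p4 p5 * xz) = 1"
  "fls_residue (ham_weight p2 p3 p4 p5 * xz ^ 2) = 0"
  using ham_weight_nth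
  by (simp_all add: xz_eq_shift fls_shifted_pow fls_shifted_times_simps)

lemma fls_residue_ham_weight_linear_product:
  "fls_residue (ham_weight p2 p3 p4 p5 *
     ((fls_const u0 + fls_const u1 * xz) * (fls_const w0 + fls_const w1 * xz))) = u0 * w1 + u1 * w0"
proof -
  have "(fls_const u0 + fls_const u1 * xz) * (fls_const w0 + fls_const w1 * xz)
      = fls_const (u0 * w0) + fls_const (u0 * w1 + u1 * w0) * xz + fls_const (u1 * w1) * xz ^ 2"
    by (simp add: algebra_simps power2_eq_square flip: fls_const_mult_const fls_plus_const)
  then show ?thesis
    by (simp add: distrib_left mult.left_commute[of _ "fls_const _"] fls_residue_add
        fls_residue_fls_const_times fls_residue_ham_weight_times_xz_power del: fls_residue_def)
qed

definition pole_series :: "complex \<Rightarrow> complex \<Rightarrow> complex \<Rightarrow> complex \<Rightarrow> complex \<Rightarrow> complex \<Rightarrow> complex fls" where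
  "pole_series p2 p3 p4 p5 b a = (yz p2 p3 p4 p5 + fls_const b) / (xz - fls_const a)"

lemma fls_residue_ham_weight_times_numerator:
  "fls_residue (ham_weight p2 p3 p4 p5 * (yz p2 p3 p4 p5 + fls_const b)) = 0"
  using ham_weight_nth(3)[of "-1"] by (simp add: distrib_left ham_weight_times_yz)

lemma fls_residue_ham_weight_times_pole_series:
  "fls_residue (ham_weight p2 p3 p4 p5 * pole_series p2 p3 p4 p5 b a) = 0"
proof -
  define G where "G = inverse (1 - fps_const a * fps_X ^ 2 :: complex fps)"
  have G1: "fps_nth G 1 = 0"
    unfolding G_def by (rule fps_inverse_nth_1) simp_all
  have "ham_weight p2 p3 p4 p5 * pole_series p2 p3 p4 p5 b a
      = (ham_weight p2 p3 p4 p5 * yz p2 p3 p4 p5 + fls_const b * ham_weight p2 p3 p4 p5)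
        * inverse (xz - fls_const a)"
    by (simp add: pole_series_def divide_inverse algebra_simps)
  also have "\<dots> = fls_shift 2 (fps_to_fls G)
      + fls_const b * fls_shift (-3) (fps_to_fls (inverse (y_root p2 p3 p4 p5) * G))"
    unfolding ham_weight_times_yz
    by (simp add: ham_weight_eq_shift inverse_xz_minus_const G_def distrib_right
        fls_shifted_times_simps mult.assoc flip: fls_times_fps_to_fls)
  finally show ?thesis
    using G1 by simp
qed

lemma xz_minus_const_nonzero: "xz - fls_const a \<noteq> 0"
proof
  assume "xz - fls_const a = 0"
  then have "fls_nth (xz - fls_const a) (-2) = 0" by simp
  then show False by (simp add: xz_eq_shift)
qed

lemma fls_residue_ham_weight_linear_times_pole_series:
  "fls_residue (ham_weight p2 p3 p4 p5 *
     ((fls_const u0 + fls_const u1 * xz) * pole_series p2 p3 p4 p5 b a)) = 0"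
proof -
  define S where "S = pole_series p2 p3 p4 p5 b a"
  have "(xz - fls_const a) * S = yz p2 p3 p4 p5 + fls_const b"
    using xz_minus_const_nonzero by (simp add: S_def pole_series_def)
  then have xS: "xz * S = yz p2 p3 p4 p5 + fls_const b + fls_const a * S"
    by (simp add: algebra_simps)
  have "ham_weight p2 p3 p4 p5 * ((fls_const u0 + fls_const u1 * xz) * S)
      = fls_const u0 * (ham_weight p2 p3 p4 p5 * S)
        + fls_const u1 * (fls_const a * (ham_weight p2 p3 p4 p5 * S))
        + fls_const u1 * (ham_weight p2 p3 p4 p5 * (yz p2 p3 p4 p5 + fls_const b))"
    unfolding distrib_right mult.assoc xS by (simp add: algebra_simps del: fls_const_mult_const)
  then show ?thesis
    unfolding S_def
    by (simp only: fls_residue_add fls_residue_fls_const_times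
        fls_residue_ham_weight_times_pole_series fls_residue_ham_weight_times_numerator) simp
qed

lemma fls_residue_ham_weight_pencil_product:
  fixes p2 p3 p4 p5 b a :: complex
  defines "S \<equiv> pole_series p2 p3 p4 p5 b a"
  shows "fls_residue (ham_weight p2 p3 p4 p5 *
     ((fls_const u0 + fls_const u1 * xz + fls_const k * S) * (fls_const w0 + fls_const w1 * xz + fls_const m * S)))
   = u0 * w1 + u1 * w0 + k * m * fls_residue (ham_weight p2 p3 p4 p5 * (S * S))"
proof -
  let ?W = "ham_weight p2 p3 p4 p5"
  have "?W * ((fls_const u0 + fls_const u1 * xz + fls_const k * S) * (fls_const w0 + fls_const w1 * xz + fls_const m * S))
     = ?W * ((fls_const u0 + fls_const u1 * xz) * (fls_const w0 + fls_const w1 * xz))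
       + fls_const m * (?W * ((fls_const u0 + fls_const u1 * xz) * S))
       + fls_const k * (?W * ((fls_const w0 + fls_const w1 * xz) * S))
       + fls_const k * (fls_const m * (?W * (S * S)))"
    by (simp add: algebra_simps del: fls_const_mult_const)
  then show ?thesis
    unfolding S_def
    by (simp only: fls_residue_add fls_residue_fls_const_times fls_residue_ham_weight_linear_product
        fls_residue_ham_weight_linear_times_pole_series) simp
qed

lemma fls_residue_ham_weight_trace_square:
  fixes p2 p3 p4 p5 b a :: complex and A B K :: "complex^'n^'n"
  defines "S \<equiv> pole_series p2 p3 p4 p5 b a"
  defines "L \<equiv> \<chi> i j. fls_const (A$i$j) + fls_const (B$i$j) * xz + fls_const (K$i$j) * S"
  shows "fls_residue (ham_weight p2 p3 p4 p5 * trace (L ** L))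
    = 2 * trace (A ** B) + trace (K ** K) * fls_residue (ham_weight p2 p3 p4 p5 * (S * S))"
proof -
  let ?W = "ham_weight p2 p3 p4 p5" and ?r = "fls_residue (ham_weight p2 p3 p4 p5 * (S * S))"
  have "fls_residue (?W * trace (L ** L)) = (\<Sum>i\<in>UNIV. \<Sum>j\<in>UNIV. fls_residue (?W * (L$i$j * L$j$i)))"
    by (simp add: trace_def matrix_matrix_mult_def sum_distrib_left fls_nth_sum)
  also have "\<dots> = (\<Sum>i\<in>UNIV. \<Sum>j\<in>UNIV. A$i$j * B$j$i + B$i$j * A$j$i + K$i$j * K$j$i * ?r)"
    unfolding L_def S_def by (simp only: vec_lambda_beta fls_residue_ham_weight_pencil_product)
  also have "\<dots> = trace (A ** B) + trace (B ** A) + trace (K ** K) * ?r"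
    by (simp add: trace_def matrix_matrix_mult_def sum.distrib sum_distrib_right)
  finally show ?thesis
    by (simp add: trace_mul_sym[of B])
qed

section \<open>The Lax equations\<close>

lemma atLeastAtMost_1_4: "{1..4::nat} = {1, 2, 3, 4}"
  by auto

lemma sum_atLeastAtMost_1_4: "(\<Sum>s\<in>{1..4::nat}. f s) = f 1 + f 2 + f 3 + f 4"
  unfolding atLeastAtMost_1_4 by (simp add: add.assoc)

lemma alphaV_simps [simp]:
  "alphaV st 1 = vector [al11 st, al21 st]" "alphaV st 2 = vector [al12 st, al22 st]"
  "alphaV st 3 = vector [1, 0]" "alphaV st 4 = vector [0, 1]"
  by (simp_all add: alphaV_def)

lemma betaV_simps [simp]:
  "betaV st 1 = vector [be11 st, be21 st]" "betaV st 2 = vector [be12 st, be22 st]"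
  "betaV st 3 = vector [0, be23 st]" "betaV st 4 = vector [be14 st, 0]"
  by (simp_all add: betaV_def)

definition pole_coeff :: "phase \<Rightarrow> nat \<Rightarrow> nat \<Rightarrow> complex" where
  "pole_coeff st s t = (pb st s + pb st t) / (pa st s - pa st t)"

lemma pole_coeff_self [simp]: "pole_coeff st s s = 0"
  by (simp add: pole_coeff_def)

lemma pole_coeff_swap: "pole_coeff st t s = - pole_coeff st s t"
  unfolding pole_coeff_def by (metis add.commute minus_diff_eq minus_divide_right)

text \<open>Division by zero makes the coefficient at t = s vanish, so the summand omitted in lax_at can be
  put back into the sum.\<close>
lemma lax_at_nth:
  assumes "s \<in> {1..4}"
  shows "lax_at st A0 A1 s $ i $ j = A0 $ i $ j + pa st s * A1 $ i $ j +
    (\<Sum>t\<in>{1..4}. pole_coeff st s t * (alphaV st t $ i * betaV st t $ j))"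
proof -
  have "(\<Sum>t\<in>{1..4}. pole_coeff st s t * (alphaV st t $ i * betaV st t $ j))
     = (\<Sum>t\<in>{1..4} - {s}. pole_coeff st s t * (alphaV st t $ i * betaV st t $ j))"
    using assms by (simp add: sum.remove pole_coeff_def)
  then show ?thesis
    by (simp add: lax_at_def sum_component smat_def outer_def pole_coeff_def)
qed

lemma lax_eqs_iff_scalar: "lax_eqs st A0 A1 \<longleftrightarrow>
  (\<forall>s\<in>{1, 2, 3, 4}. \<forall>i. (\<Sum>j\<in>UNIV. lax_at st A0 A1 s $ i $ j * alphaV st s $ j) = kap st s * alphaV st s $ i)"
  unfolding lax_eqs_def atLeastAtMost_1_4 by (simp add: vec_eq_iff matrix_vector_mult_def)

lemma laxz_single_pole:
  assumes "s0 \<in> {1..4}" and "\<forall>s\<in>{1..4}. s \<noteq> s0 \<longrightarrow> betaV st s = 0"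
  shows "laxz p2 p3 p4 p5 st A0 A1 = (\<chi> i j. fls_const (A0$i$j) + fls_const (A1$i$j) * xz
     + fls_const (outer (alphaV st s0) (betaV st s0) $i$j) * pole_series p2 p3 p4 p5 (pb st s0) (pa st s0))"
proof -
  have "(\<Sum>s\<in>{1..4}. fls_const (alphaV st s $ i * betaV st s $ j) *
          ((yz p2 p3 p4 p5 + fls_const (pb st s)) / (xz - fls_const (pa st s))))
      = fls_const (outer (alphaV st s0) (betaV st s0) $i$j) * pole_series p2 p3 p4 p5 (pb st s0) (pa st s0)"
    for i j
    using assms by (simp add: sum.remove[of _ s0] sum.neutral outer_def pole_series_def)
  then show ?thesis
    unfolding laxz_def by simp
qed

lemma Ham_single_pole:
  assumes "lax_solution st = (A0, A1)"
    and "s0 \<in> {1..4}" and "\<forall>s\<in>{1..4}. s \<noteq> s0 \<longrightarrow> betaV st s = 0"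
  shows "Ham p2 p3 p4 p5 st = - 2 * trace (A0 ** A1)
     - trace (outer (alphaV st s0) (betaV st s0) ** outer (alphaV st s0) (betaV st s0))
       * fls_residue (ham_weight p2 p3 p4 p5 *
           (pole_series p2 p3 p4 p5 (pb st s0) (pa st s0) * pole_series p2 p3 p4 p5 (pb st s0) (pa st s0)))"
  using fls_residue_ham_weight_trace_square[where b = "pb st s0" and a = "pa st s0" and A = A0 and B = A1]
  by (simp add: Ham_def assms(1) laxz_single_pole[OF assms(2,3)] ham_weight_def Let_def del: fls_residue_def)

lemma lax_solution_eqI:
  assumes "\<And>A0 A1. lax_eqs st A0 A1 \<longleftrightarrow> (A0, A1) = P"
  shows "lax_solution st = P"
  unfolding lax_solution_def using assms by (intro the_equality) auto

lemma smat_mult_vec: "smat c M *v v = c *s (M *v v)"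
  by (simp add: smat_def vec_eq_iff matrix_vector_mult_def sum_distrib_left mult.assoc)

lemma lax_eqs_shift_iff:
  assumes "\<forall>s\<in>{1..4}. (pa st s - c) *s (E *v alphaV st s) = 0"
  shows "lax_eqs st (A0 - smat c E) (A1 + E) \<longleftrightarrow> lax_eqs st A0 A1"
proof -
  have "lax_at st (A0 - smat c E) (A1 + E) s = lax_at st A0 A1 s + smat (pa st s - c) E" for s
    by (simp add: lax_at_def smat_def vec_eq_iff algebra_simps)
  then have "lax_at st (A0 - smat c E) (A1 + E) s *v alphaV st s = lax_at st A0 A1 s *v alphaV st s"
    if "s \<in> {1..4}" for s
    using assms that by (simp add: matrix_vector_mult_add_rdistrib smat_mult_vec)
  then show ?thesis
    unfolding lax_eqs_def by simp
qed

lemma shift_trivial_if_unique: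
  fixes E :: "complex^2^2"
  assumes "\<exists>!A. lax_eqs st (fst A) (snd A)"
    and "\<forall>s\<in>{1..4}. (pa st s - c) *s (E *v alphaV st s) = 0"
  shows "E = 0"
proof -
  obtain A where A: "lax_eqs st (fst A) (snd A)" using assms(1) by auto
  then have "lax_eqs st (fst (fst A - smat c E, snd A + E)) (snd (fst A - smat c E, snd A + E))"
    using lax_eqs_shift_iff[OF assms(2)] by simp
  then have "(fst A - smat c E, snd A + E) = A"
    using assms(1) A by blast
  then show "E = 0"
    by (metis add_cancel_right_right snd_conv)
qed

section \<open>Triangular pencils\<close>

definition chord :: "'a::field \<Rightarrow> 'a \<Rightarrow> 'a \<Rightarrow> 'a \<Rightarrow> 'a \<times> 'a" where
  "chord p q P Q = ((p * Q - q * P) / (p - q), (P - Q) / (p - q))"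

lemma chord_iff:
  assumes "p \<noteq> q"
  shows "(x0 + p * x1 = P \<and> x0 + q * x1 = Q) \<longleftrightarrow> (x0, x1) = chord p q P Q"
proof -
  have "p - q \<noteq> 0" using assms by simp
  have "(x0 + p * x1 = P \<and> x0 + q * x1 = Q) \<longleftrightarrow> (x1 * (p - q) = P - Q \<and> x0 = P - p * x1)"
    by (auto simp: algebra_simps)
  also have "\<dots> \<longleftrightarrow> (x1 = (P - Q) / (p - q) \<and> x0 = P - p * x1)"
    using \<open>p - q \<noteq> 0\<close> by (auto simp: field_simps)
  also have "\<dots> \<longleftrightarrow> (x0, x1) = chord p q P Q"
    using \<open>p - q \<noteq> 0\<close> by (auto simp: chord_def) (simp_all add: field_simps)
  finally show ?thesis .
qed

lemma chord_zero [simp]: "chord p q 0 0 = (0, 0)"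
  by (simp add: chord_def)

text \<open>The Lax equations of the lower configuration below, with A0 = (x_ij) and A1 = (y_ij): entry 12
  vanishes at p1 and p4, entry 22 is fixed there, and then the equations at p2 and p3 fix the entries
  11 and 21.\<close>
lemma lower_pencil_system_iff:
  fixes x11 x12 x21 x22 y11 y12 y21 y22 p1 p2 p3 p4 k1 k2 k3 k4 r v e f g h :: "'a::field"
  assumes "p1 \<noteq> p4" "p2 \<noteq> p3" "r \<noteq> 0"
  defines "l22 \<equiv> chord p1 p4 k1 (k4 - h)"
  defines "e21 \<equiv> (k2 - (fst l22 + p2 * snd l22) - f) * v / r - e"
  shows "(x12 + p1 * y12 = 0 \<and> x22 + p1 * y22 = k1 \<and>
          (x11 + p2 * y11) * r + (x12 + p2 * y12) * v = k2 * r \<and>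
          (x21 + p2 * y21 + e) * r + (x22 + p2 * y22 + f) * v = k2 * v \<and>
          x11 + p3 * y11 = k3 \<and> x21 + p3 * y21 + g = 0 \<and>
          x12 + p4 * y12 = 0 \<and> x22 + p4 * y22 + h = k4)
     \<longleftrightarrow> (x11, y11) = chord p2 p3 k2 k3 \<and> (x12, y12) = (0, 0) \<and>
         (x21, y21) = chord p2 p3 e21 (- g) \<and> (x22, y22) = l22"
proof -
  have row12: "(x12 + p1 * y12 = 0 \<and> x12 + p4 * y12 = 0) \<longleftrightarrow> (x12, y12) = (0, 0)"
    using chord_iff[OF assms(1), of x12 y12 0 0] by simp
  have row22: "(x22 + p1 * y22 = k1 \<and> x22 + p4 * y22 + h = k4) \<longleftrightarrow> (x22, y22) = l22"
    using chord_iff[OF assms(1), of x22 y22 k1 "k4 - h"] by (auto simp: l22_def eq_diff_eq)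
  have row11: "(x12, y12) = (0, 0) \<Longrightarrow>
      (x11 + p2 * y11) * r + (x12 + p2 * y12) * v = k2 * r \<longleftrightarrow> x11 + p2 * y11 = k2"
    using assms(3) by auto
  have row21: "(x22, y22) = l22 \<Longrightarrow>
      (x21 + p2 * y21 + e) * r + (x22 + p2 * y22 + f) * v = k2 * v \<longleftrightarrow> x21 + p2 * y21 = e21"
    using assms(3) by (auto simp: e21_def field_simps)
  show ?thesis
    using row12 row22 row11 row21 chord_iff[OF assms(2), of x11 y11 k2 k3]
      chord_iff[OF assms(2), of x21 y21 e21 "- g"]
    by (auto simp: eq_neg_iff_add_eq_0)
qed

definition pencil :: "'a::zero \<times> 'a \<Rightarrow> 'a \<times> 'a \<Rightarrow> 'a \<times> 'a \<Rightarrow> 'a \<times> 'a \<Rightarrow> ('a^2^2) \<times> ('a^2^2)" where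
  "pencil l11 l12 l21 l22 =
     (vector [vector [fst l11, fst l12], vector [fst l21, fst l22]],
      vector [vector [snd l11, snd l12], vector [snd l21, snd l22]])"

lemma pencil_eq_iff:
  "(A0, A1) = pencil l11 l12 l21 l22 \<longleftrightarrow>
     (A0$1$1, A1$1$1) = l11 \<and> (A0$1$2, A1$1$2) = l12 \<and> (A0$2$1, A1$2$1) = l21 \<and> (A0$2$2, A1$2$2) = l22"
  by (auto simp: pencil_def vec_eq_iff forall_2 prod_eq_iff)

lemma trace_pencil:
  "trace (fst (pencil l11 l12 l21 l22) ** snd (pencil l11 l12 l21 l22))
     = fst l11 * snd l11 + fst l12 * snd l21 + fst l21 * snd l12 + fst l22 * snd l22"
  by (simp add: pencil_def trace_def matrix_matrix_mult_def sum_2 add.assoc)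

lemma trace_outer_square:
  fixes u v :: "'a::comm_semiring_1^'n"
  shows "trace (outer u v ** outer u v) = (\<Sum>i\<in>UNIV. u$i * v$i)^2"
proof -
  have "trace (outer u v ** outer u v) = (\<Sum>i\<in>UNIV. \<Sum>j\<in>UNIV. (u$i * v$i) * (u$j * v$j))"
    unfolding trace_def matrix_matrix_mult_def outer_def by (simp add: mult_ac)
  then show ?thesis
    by (simp add: power2_eq_square sum_product)
qed

section \<open>The reduced Hamiltonian\<close>

definition pair_energy :: "complex \<Rightarrow> complex \<Rightarrow> complex \<Rightarrow> complex \<Rightarrow> complex" where
  "pair_energy p q P Q = 2 * (P - Q) * (q * P - p * Q) / (p - q)^2"

definition pair_velocity :: "complex \<Rightarrow> complex \<Rightarrow> complex \<Rightarrow> complex \<Rightarrow> complex" where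
  "pair_velocity p q P Q = 2 * (2 * q * P - p * Q - q * Q) / (p - q)^2"

lemma chord_product: "2 * (fst (chord p q P Q) * snd (chord p q P Q)) = - pair_energy p q P Q"
proof -
  have "2 * ((p * Q - q * P) * (P - Q)) = - (2 * (P - Q) * (q * P - p * Q))"
    by (simp add: algebra_simps)
  then show ?thesis
    by (simp add: chord_def pair_energy_def power2_eq_square times_divide_times_eq)
qed

lemma pair_energy_swap: "pair_energy q p Q P = pair_energy p q P Q"
  by (simp add: pair_energy_def power2_commute algebra_simps)

lemma has_field_derivative_pair_energy_momentum:
  assumes "p \<noteq> q"
  shows "((\<lambda>t. pair_energy p q t Q) has_field_derivative pair_velocity p q P Q) (at P)"
proof -
  have "p - q \<noteq> 0" using assms by simp
  then show ?thesis
    unfolding pair_energy_def pair_velocity_def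
    by (auto intro!: derivative_eq_intros simp: divide_simps power2_eq_square) (simp add: algebra_simps)
qed

lemma has_field_derivative_pair_energy_position:
  assumes "p \<noteq> q"
  shows "((\<lambda>t. pair_energy t q P Q) has_field_derivative - ((P - Q) / (p - q) * pair_velocity p q P Q)) (at p)"
proof -
  have "p - q \<noteq> 0" using assms by simp
  then show ?thesis
    unfolding pair_energy_def pair_velocity_def
    by (auto intro!: derivative_eq_intros simp: divide_simps power2_eq_square) (simp add: algebra_simps)
qed

lemma Hr_eq_pair_energy:
  "Hr a k = pair_energy (a 1) (a 4) (k 1) (k 4) + pair_energy (a 2) (a 3) (k 2) (k 3)"
  by (simp add: Hr_def pair_energy_def mult.assoc)

text \<open>H^(r) couples the indices in the pairs {1, 4} and {2, 3}; 5 - s is the partner of s.\<close>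
lemma Hr_update_eq_pair_energy:
  assumes "s \<in> {1..4}"
  obtains c where "\<And>x t. Hr (a(s := x)) (k(s := t)) = pair_energy x (a (5 - s)) t (k (5 - s)) + c"
proof -
  consider "s = 1" | "s = 2" | "s = 3" | "s = 4" using assms by fastforce
  then show ?thesis
    by cases (rule that, simp add: Hr_eq_pair_energy pair_energy_swap add.commute)+
qed

lemma adot_eq_pair_velocity:
  assumes "s \<in> {1..4}"
  shows "adot a k s = pair_velocity (a s) (a (5 - s)) (k s) (k (5 - s))"
proof -
  consider "s = 1" | "s = 2" | "s = 3" | "s = 4" using assms by fastforce
  then show ?thesis
    by cases (simp_all add: adot_def pair_velocity_def power2_commute algebra_simps)
qed

lemma kdot_eq_adot:
  assumes "s \<in> {1..4}"
  shows "kdot a k s = (k s - k (5 - s)) / (a s - a (5 - s)) * adot a k s"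
proof -
  have swap: "(k i - k j) / (a i - a j) = (k j - k i) / (a j - a i)" for i j
    by (metis minus_diff_eq minus_divide_divide)
  consider "s = 1" | "s = 2" | "s = 3" | "s = 4" using assms by fastforce
  then show ?thesis
    by cases (simp_all add: kdot_def swap[of 2 3] swap[of "Suc 0" 4])
qed

lemma partner_distinct:
  assumes "s \<in> {1..4::nat}" "a 1 \<noteq> a 4" "a 2 \<noteq> a 3"
  shows "a s \<noteq> a (5 - s)"
proof -
  consider "s = 1" | "s = 2" | "s = 3" | "s = 4" using assms by fastforce
  then show ?thesis
    by cases (use assms in auto)
qed

lemma fun_upd_partner_distinct:
  assumes "s \<in> {1..4::nat}" "a 1 \<noteq> a 4" "a 2 \<noteq> a 3" "x \<noteq> a (5 - s)"
  shows "(a(s := x)) 1 \<noteq> (a(s := x)) 4 \<and> (a(s := x)) 2 \<noteq> (a(s := x)) 3"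
proof -
  consider "s = 1" | "s = 2" | "s = 3" | "s = 4" using assms by fastforce
  then show ?thesis
    by cases (use assms in auto)
qed

lemma has_field_derivative_Hr_kap:
  assumes "s \<in> {1..4}" "a 1 \<noteq> a 4" "a 2 \<noteq> a 3"
  shows "((\<lambda>t. Hr a (k(s := t))) has_field_derivative adot a k s) (at (k s))"
proof -
  obtain c where "\<And>x t. Hr (a(s := x)) (k(s := t)) = pair_energy x (a (5 - s)) t (k (5 - s)) + c"
    using Hr_update_eq_pair_energy[OF assms(1)] by blast
  from this[of "a s"] show ?thesis
    using DERIV_add[OF has_field_derivative_pair_energy_momentum[OF partner_distinct[OF assms]] DERIV_const]
    by (simp add: adot_eq_pair_velocity[OF assms(1)])
qed

lemma has_field_derivative_Hr_pa:
  assumes "s \<in> {1..4}" "a 1 \<noteq> a 4" "a 2 \<noteq> a 3"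
  shows "((\<lambda>t. Hr (a(s := t)) k) has_field_derivative - kdot a k s) (at (a s))"
proof -
  obtain c where "\<And>x t. Hr (a(s := x)) (k(s := t)) = pair_energy x (a (5 - s)) t (k (5 - s)) + c"
    using Hr_update_eq_pair_energy[OF assms(1)] by blast
  from this[of _ "k s"] show ?thesis
    using DERIV_add[OF has_field_derivative_pair_energy_position[OF partner_distinct[OF assms]] DERIV_const]
    by (simp only: kdot_eq_adot[OF assms(1)] adot_eq_pair_velocity[OF assms(1)] fun_upd_triv add_0_right)
qed

lemma has_field_derivative_Hr_kap_linear:
  assumes "s \<in> {1..4}" "a 1 \<noteq> a 4" "a 2 \<noteq> a 3"
  shows "((\<lambda>t. Hr a (k(s := k s - c * t)) - (d * t)^2 * e) has_field_derivative - c * adot a k s) (at 0)"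
proof -
  have "((\<lambda>t. k s - c * t) has_field_derivative - c) (at 0)"
    by (auto intro!: derivative_eq_intros)
  from DERIV_chain2[of "\<lambda>u. Hr a (k(s := u))", OF _ this]
  have "((\<lambda>t. Hr a (k(s := k s - c * t))) has_field_derivative adot a k s * - c) (at 0)"
    using has_field_derivative_Hr_kap[OF assms] by simp
  moreover have "((\<lambda>t. (d * t)^2 * e) has_field_derivative 0) (at 0)"
    by (auto intro!: derivative_eq_intros)
  ultimately have "((\<lambda>t. Hr a (k(s := k s - c * t)) - (d * t)^2 * e) has_field_derivative
      adot a k s * - c - 0) (at 0)"
    by (rule DERIV_diff)
  then show ?thesis
    by (simp add: mult.commute)
qed

section \<open>The lower and upper configurations\<close>

definition nondegenerate :: "phase \<Rightarrow> bool" where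
  "nondegenerate st \<longleftrightarrow> pa st 1 \<noteq> pa st 4 \<and> pa st 2 \<noteq> pa st 3 \<and> al21 st \<noteq> 0 \<and> al12 st \<noteq> 0"

text \<open>In the lower configuration the Lax equations make A(x) lower triangular, in the upper one upper
  triangular.\<close>
definition lower_config :: "phase \<Rightarrow> bool" where
  "lower_config st \<longleftrightarrow>
     nondegenerate st \<and> al11 st = 0 \<and> be12 st = 0 \<and> be22 st = 0 \<and> be23 st = 0 \<and> be14 st = 0"

definition upper_config :: "phase \<Rightarrow> bool" where
  "upper_config st \<longleftrightarrow>
     nondegenerate st \<and> al22 st = 0 \<and> be11 st = 0 \<and> be21 st = 0 \<and> be23 st = 0 \<and> be14 st = 0"

definition lower_pencil :: "phase \<Rightarrow> (complex^2^2) \<times> (complex^2^2)" where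
  "lower_pencil st =
     (let a = pa st; k = kap st; w = al21 st;
          l22 = chord (a 1) (a 4) (k 1) (k 4 - pole_coeff st 4 1 * (w * be21 st));
          e21 = (k 2 - (fst l22 + a 2 * snd l22) - pole_coeff st 2 1 * (w * be21 st)) * al22 st / al12 st
                - pole_coeff st 2 1 * (w * be11 st)
      in pencil (chord (a 2) (a 3) (k 2) (k 3)) (0, 0)
           (chord (a 2) (a 3) e21 (- (pole_coeff st 3 1 * (w * be11 st)))) l22)"

definition upper_pencil :: "phase \<Rightarrow> (complex^2^2) \<times> (complex^2^2)" where
  "upper_pencil st =
     (let a = pa st; k = kap st; r = al12 st;
          l11 = chord (a 2) (a 3) (k 2) (k 3 - pole_coeff st 3 2 * (r * be12 st));
          e12 = (k 1 - (fst l11 + a 1 * snd l11) - pole_coeff st 1 2 * (r * be12 st)) * al11 st / al21 st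
                - pole_coeff st 1 2 * (r * be22 st)
      in pencil l11 (chord (a 1) (a 4) e12 (- (pole_coeff st 4 2 * (r * be22 st)))) (0, 0)
           (chord (a 1) (a 4) (k 1) (k 4)))"

lemma lax_eqs_lower_iff:
  assumes "lower_config st"
  shows "lax_eqs st A0 A1 \<longleftrightarrow> (A0, A1) = lower_pencil st"
proof -
  from assms have nd: "pa st 1 \<noteq> pa st 4" "pa st 2 \<noteq> pa st 3" "al12 st \<noteq> 0" "al21 st \<noteq> 0"
    and z: "al11 st = 0" "be12 st = 0" "be22 st = 0" "be23 st = 0" "be14 st = 0"
    by (simp_all add: lower_config_def nondegenerate_def)
  show ?thesis
    unfolding lax_eqs_iff_scalar lower_pencil_def Let_def pencil_eq_iff
    using lower_pencil_system_iff[OF nd(1-3), where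
      ?k1.0 = "kap st 1" and ?k2.0 = "kap st 2" and ?k3.0 = "kap st 3" and ?k4.0 = "kap st 4"
      and v = "al22 st"
      and e = "pole_coeff st 2 1 * (al21 st * be11 st)" and f = "pole_coeff st 2 1 * (al21 st * be21 st)"
      and g = "pole_coeff st 3 1 * (al21 st * be11 st)" and h = "pole_coeff st 4 1 * (al21 st * be21 st)"
      and ?x11.0 = "A0$1$1" and ?x12.0 = "A0$1$2" and ?x21.0 = "A0$2$1" and ?x22.0 = "A0$2$2"
      and ?y11.0 = "A1$1$1" and ?y12.0 = "A1$1$2" and ?y21.0 = "A1$2$1" and ?y22.0 = "A1$2$2"]
    by (simp add: sum_atLeastAtMost_1_4 lax_at_nth forall_2 sum_2 nd z del: One_nat_def)
qed

text \<open>The upper configuration is the lower one with the two components and the indices 1, 4 and 2, 3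
  interchanged.\<close>
lemma lax_eqs_upper_iff:
  assumes "upper_config st"
  shows "lax_eqs st A0 A1 \<longleftrightarrow> (A0, A1) = upper_pencil st"
proof -
  from assms have nd: "pa st 2 \<noteq> pa st 3" "pa st 1 \<noteq> pa st 4" "al21 st \<noteq> 0" "al12 st \<noteq> 0"
    and z: "al22 st = 0" "be11 st = 0" "be21 st = 0" "be23 st = 0" "be14 st = 0"
    by (simp_all add: upper_config_def nondegenerate_def)
  show ?thesis
    unfolding lax_eqs_iff_scalar upper_pencil_def Let_def pencil_eq_iff
    using lower_pencil_system_iff[OF nd(1-3), where
      ?k1.0 = "kap st 2" and ?k2.0 = "kap st 1" and ?k3.0 = "kap st 4" and ?k4.0 = "kap st 3"
      and v = "al11 st"
      and e = "pole_coeff st 1 2 * (al12 st * be22 st)" and f = "pole_coeff st 1 2 * (al12 st * be12 st)"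
      and g = "pole_coeff st 4 2 * (al12 st * be22 st)" and h = "pole_coeff st 3 2 * (al12 st * be12 st)"
      and ?x11.0 = "A0$2$2" and ?x12.0 = "A0$2$1" and ?x21.0 = "A0$1$2" and ?x22.0 = "A0$1$1"
      and ?y11.0 = "A1$2$2" and ?y12.0 = "A1$2$1" and ?y21.0 = "A1$1$2" and ?y22.0 = "A1$1$1"]
    by (simp add: sum_atLeastAtMost_1_4 lax_at_nth forall_2 sum_2 nd z
        add.commute[of "(A0$2$2 + pa st 1 * A1$2$2) * al21 st"]
        add.commute[of "(A0$1$2 + pa st 1 * A1$1$2 + pole_coeff st 1 2 * (al12 st * be22 st)) * al21 st"]
        del: One_nat_def) blast
qed

lemma vector_2_zero: "vector [0, 0] = (0 :: 'a::zero^2)"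
  by (simp add: vec_eq_iff forall_2)

lemma Ham_lower:
  assumes "lower_config st"
  shows "Ham p2 p3 p4 p5 st
    = Hr (pa st) ((kap st)(4 := kap st 4 - pole_coeff st 4 1 * (al21 st * be21 st)))
      - (al21 st * be21 st)^2 * fls_residue (ham_weight p2 p3 p4 p5 *
          (pole_series p2 p3 p4 p5 (pb st 1) (pa st 1) * pole_series p2 p3 p4 p5 (pb st 1) (pa st 1)))"
proof -
  note cfg = assms[unfolded lower_config_def]
  have sol: "lax_solution st = (fst (lower_pencil st), snd (lower_pencil st))"
    using lax_eqs_lower_iff[OF assms] by (intro lax_solution_eqI) simp
  have poles: "\<forall>s\<in>{1..4}. s \<noteq> 1 \<longrightarrow> betaV st s = 0"
    using cfg unfolding atLeastAtMost_1_4 by (simp add: vector_2_zero del: One_nat_def)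
  show ?thesis
    using Ham_single_pole[OF sol _ poles] cfg
    by (simp add: trace_pencil chord_product Hr_eq_pair_energy trace_outer_square sum_2 lower_pencil_def
        Let_def distrib_left add.commute del: One_nat_def)
qed

lemma Ham_upper:
  assumes "upper_config st"
  shows "Ham p2 p3 p4 p5 st
    = Hr (pa st) ((kap st)(3 := kap st 3 - pole_coeff st 3 2 * (al12 st * be12 st)))
      - (al12 st * be12 st)^2 * fls_residue (ham_weight p2 p3 p4 p5 *
          (pole_series p2 p3 p4 p5 (pb st 2) (pa st 2) * pole_series p2 p3 p4 p5 (pb st 2) (pa st 2)))"
proof -
  note cfg = assms[unfolded upper_config_def]
  have sol: "lax_solution st = (fst (upper_pencil st), snd (upper_pencil st))"
    using lax_eqs_upper_iff[OF assms] by (intro lax_solution_eqI) simp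
  have poles: "\<forall>s\<in>{1..4}. s \<noteq> 2 \<longrightarrow> betaV st s = 0"
    using cfg unfolding atLeastAtMost_1_4 by (simp add: vector_2_zero del: One_nat_def)
  show ?thesis
    using Ham_single_pole[OF sol _ poles] cfg
    by (simp add: trace_pencil chord_product Hr_eq_pair_energy trace_outer_square sum_2 upper_pencil_def
        Let_def distrib_left add.commute del: One_nat_def)
qed

section \<open>The subvariety Z\<close>

text \<open>If alpha_21 = 0 then alpha_1 = 0, and (x - a_4) E_22 can be added to any solution A(x); likewise
  (x - a_3) E_11 if alpha_12 = 0.\<close>
lemma gauge_alpha_nonzero_if_unique:
  assumes "\<exists>!A. lax_eqs st (fst A) (snd A)" and "al11 st = 0" "al22 st = 0"
  shows "al21 st \<noteq> 0" "al12 st \<noteq> 0"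
proof -
  have "vector [vector [0, 0], vector [0, 1]] \<noteq> (0 :: complex^2^2)"
    by (metis vector_2(2) vector_2(2)[of "0::complex"] zero_index zero_neq_one)
  moreover have "al21 st = 0 \<Longrightarrow> \<forall>s\<in>{1..4}.
      (pa st s - pa st 4) *s (vector [vector [0, 0], vector [0, 1]] *v alphaV st s) = (0 :: complex^2)"
    using assms(2,3) unfolding atLeastAtMost_1_4
    by (simp add: vec_eq_iff forall_2 matrix_vector_mult_def sum_2 del: One_nat_def)
  ultimately show "al21 st \<noteq> 0"
    using shift_trivial_if_unique[OF assms(1)] by blast
  have "vector [vector [1, 0], vector [0, 0]] \<noteq> (0 :: complex^2^2)"
    by (metis vector_2(1) vector_2(1)[of "1::complex"] zero_index zero_neq_one)
  moreover have "al12 st = 0 \<Longrightarrow> \<forall>s\<in>{1..4}.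
      (pa st s - pa st 3) *s (vector [vector [1, 0], vector [0, 0]] *v alphaV st s) = (0 :: complex^2)"
    using assms(2,3) unfolding atLeastAtMost_1_4
    by (simp add: vec_eq_iff forall_2 matrix_vector_mult_def sum_2 del: One_nat_def)
  ultimately show "al12 st \<noteq> 0"
    using shift_trivial_if_unique[OF assms(1)] by blast
qed

definition in_Z :: "phase \<Rightarrow> bool" where
  "in_Z st \<longleftrightarrow> al11 st = 0 \<and> al22 st = 0 \<and> be11 st = 0 \<and> be21 st = 0 \<and> be12 st = 0 \<and> be22 st = 0
     \<and> be23 st = 0 \<and> be14 st = 0"

lemma Ham_eq_Hr_if_lower_config:
  "lower_config st \<Longrightarrow> be21 st = 0 \<Longrightarrow> Ham p2 p3 p4 p5 st = Hr (pa st) (kap st)"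
  using Ham_lower by simp

lemma Ham_eq_Hr_if_upper_config:
  "upper_config st \<Longrightarrow> be12 st = 0 \<Longrightarrow> Ham p2 p3 p4 p5 st = Hr (pa st) (kap st)"
  using Ham_upper by simp

lemma Ham_eq_Hr_on_Z:
  assumes "in_Z st" "nondegenerate st"
  shows "Ham p2 p3 p4 p5 st = Hr (pa st) (kap st)"
  using assms by (intro Ham_eq_Hr_if_lower_config) (simp_all add: in_Z_def lower_config_def)

lemma has_field_derivative_Ham_constant_on_Z:
  assumes "in_Z st" "nondegenerate st"
  shows "((\<lambda>t. Ham p2 p3 p4 p5 (st\<lparr>be11 := t\<rparr>)) has_field_derivative 0) (at (be11 st))"
    and "((\<lambda>t. Ham p2 p3 p4 p5 (st\<lparr>be22 := t\<rparr>)) has_field_derivative 0) (at (be22 st))"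
    and "((\<lambda>t. Ham p2 p3 p4 p5 (st\<lparr>al11 := t\<rparr>)) has_field_derivative 0) (at (al11 st))"
    and "((\<lambda>t. Ham p2 p3 p4 p5 (st\<lparr>al22 := t\<rparr>)) has_field_derivative 0) (at (al22 st))"
    and "((\<lambda>t. Ham p2 p3 p4 p5 (st\<lparr>al21 := t\<rparr>)) has_field_derivative 0) (at (al21 st))"
    and "((\<lambda>t. Ham p2 p3 p4 p5 (st\<lparr>al12 := t\<rparr>)) has_field_derivative 0) (at (al12 st))"
proof -
  note defs = in_Z_def nondegenerate_def lower_config_def upper_config_def
  have "Ham p2 p3 p4 p5 (st\<lparr>be11 := t\<rparr>) = Hr (pa st) (kap st)"
    "Ham p2 p3 p4 p5 (st\<lparr>al22 := t\<rparr>) = Hr (pa st) (kap st)" for t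
    using Ham_eq_Hr_if_lower_config[of "st\<lparr>be11 := t\<rparr>"] Ham_eq_Hr_if_lower_config[of "st\<lparr>al22 := t\<rparr>"]
      assms by (simp_all add: defs)
  moreover have "Ham p2 p3 p4 p5 (st\<lparr>be22 := t\<rparr>) = Hr (pa st) (kap st)"
    "Ham p2 p3 p4 p5 (st\<lparr>al11 := t\<rparr>) = Hr (pa st) (kap st)" for t
    using Ham_eq_Hr_if_upper_config[of "st\<lparr>be22 := t\<rparr>"] Ham_eq_Hr_if_upper_config[of "st\<lparr>al11 := t\<rparr>"]
      assms by (simp_all add: defs)
  ultimately show "((\<lambda>t. Ham p2 p3 p4 p5 (st\<lparr>be11 := t\<rparr>)) has_field_derivative 0) (at (be11 st))"
    "((\<lambda>t. Ham p2 p3 p4 p5 (st\<lparr>be22 := t\<rparr>)) has_field_derivative 0) (at (be22 st))"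
    "((\<lambda>t. Ham p2 p3 p4 p5 (st\<lparr>al11 := t\<rparr>)) has_field_derivative 0) (at (al11 st))"
    "((\<lambda>t. Ham p2 p3 p4 p5 (st\<lparr>al22 := t\<rparr>)) has_field_derivative 0) (at (al22 st))"
    by simp_all
  have al21: "Ham p2 p3 p4 p5 (st\<lparr>al21 := t\<rparr>) = Hr (pa st) (kap st)"
    and al12: "Ham p2 p3 p4 p5 (st\<lparr>al12 := t\<rparr>) = Hr (pa st) (kap st)" if "t \<noteq> 0" for t
    using Ham_eq_Hr_if_lower_config[of "st\<lparr>al21 := t\<rparr>"] Ham_eq_Hr_if_lower_config[of "st\<lparr>al12 := t\<rparr>"]
      assms that by (simp_all add: defs)
  note locally_const = has_field_derivative_transform_within_open[OF DERIV_const open_delete[OF open_UNIV, of 0]]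
  show "((\<lambda>t. Ham p2 p3 p4 p5 (st\<lparr>al21 := t\<rparr>)) has_field_derivative 0) (at (al21 st))"
    by (rule locally_const) (use assms(2) al21 in \<open>auto simp: nondegenerate_def\<close>)
  show "((\<lambda>t. Ham p2 p3 p4 p5 (st\<lparr>al12 := t\<rparr>)) has_field_derivative 0) (at (al12 st))"
    by (rule locally_const) (use assms(2) al12 in \<open>auto simp: nondegenerate_def\<close>)
qed

lemma has_field_derivative_Ham_kap_on_Z:
  assumes "in_Z st" "nondegenerate st" "s \<in> {1..4}"
  shows "((\<lambda>t. Ham p2 p3 p4 p5 (st\<lparr>kap := (kap st)(s := t)\<rparr>)) has_field_derivative adot (pa st) (kap st) s)
    (at (kap st s))"
proof -
  have "Ham p2 p3 p4 p5 (st\<lparr>kap := (kap st)(s := t)\<rparr>) = Hr (pa st) ((kap st)(s := t))" for t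
    using Ham_eq_Hr_if_lower_config[of "st\<lparr>kap := (kap st)(s := t)\<rparr>"] assms(1,2)
    by (simp add: in_Z_def nondegenerate_def lower_config_def)
  then show ?thesis
    using has_field_derivative_Hr_kap[OF assms(3)] assms(2) by (simp add: nondegenerate_def)
qed

lemma has_field_derivative_Ham_pa_on_Z:
  assumes "in_Z st" "nondegenerate st" "s \<in> {1..4}"
  shows "((\<lambda>t. Ham p2 p3 p4 p5 (st\<lparr>pa := (pa st)(s := t), pb := (pb st)(s := f t)\<rparr>))
    has_field_derivative - kdot (pa st) (kap st) s) (at (pa st s))"
proof (rule has_field_derivative_transform_within_open[OF has_field_derivative_Hr_pa[OF assms(3)]])
  note nd = assms(2)[unfolded nondegenerate_def]
  show "open (UNIV - {pa st (5 - s)})" "pa st s \<in> UNIV - {pa st (5 - s)}"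
    using partner_distinct[OF assms(3)] nd by auto
  show "Hr ((pa st)(s := t)) (kap st) = Ham p2 p3 p4 p5 (st\<lparr>pa := (pa st)(s := t), pb := (pb st)(s := f t)\<rparr>)"
    if "t \<in> UNIV - {pa st (5 - s)}" for t
    using Ham_eq_Hr_if_lower_config[of "st\<lparr>pa := (pa st)(s := t), pb := (pb st)(s := f t)\<rparr>"] assms(1) nd
      fun_upd_partner_distinct[OF assms(3), of "pa st" t] that
    by (simp add: in_Z_def nondegenerate_def lower_config_def)
qed (use assms(2) in \<open>simp_all add: nondegenerate_def\<close>)

lemma has_field_derivative_Ham_be12_on_Z:
  assumes "in_Z st" "nondegenerate st"
  shows "((\<lambda>t. Ham p2 p3 p4 p5 (st\<lparr>be12 := t\<rparr>)) has_field_derivative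
    al12 st * (pb st 2 + pb st 3) / (pa st 2 - pa st 3) * adot (pa st) (kap st) 3) (at (be12 st))"
proof -
  have "Ham p2 p3 p4 p5 (st\<lparr>be12 := t\<rparr>)
      = Hr (pa st) ((kap st)(3 := kap st 3 - pole_coeff st 3 2 * al12 st * t))
        - (al12 st * t)^2 * fls_residue (ham_weight p2 p3 p4 p5 *
            (pole_series p2 p3 p4 p5 (pb st 2) (pa st 2) * pole_series p2 p3 p4 p5 (pb st 2) (pa st 2)))" for t
    using Ham_upper[of "st\<lparr>be12 := t\<rparr>"] assms
    by (simp add: in_Z_def nondegenerate_def upper_config_def pole_coeff_def mult.assoc del: fls_residue_def)
  then have "((\<lambda>t. Ham p2 p3 p4 p5 (st\<lparr>be12 := t\<rparr>)) has_field_derivative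
      - (pole_coeff st 3 2 * al12 st) * adot (pa st) (kap st) 3) (at 0)"
    using has_field_derivative_Hr_kap_linear assms(2) by (simp add: nondegenerate_def)
  then show ?thesis
    using assms(1) unfolding pole_coeff_swap[of st 3 2] by (simp add: in_Z_def pole_coeff_def mult_ac)
qed

lemma has_field_derivative_Ham_be21_on_Z:
  assumes "in_Z st" "nondegenerate st"
  shows "((\<lambda>t. Ham p2 p3 p4 p5 (st\<lparr>be21 := t\<rparr>)) has_field_derivative
    al21 st * (pb st 1 + pb st 4) / (pa st 1 - pa st 4) * adot (pa st) (kap st) 4) (at (be21 st))"
proof -
  have "Ham p2 p3 p4 p5 (st\<lparr>be21 := t\<rparr>)
      = Hr (pa st) ((kap st)(4 := kap st 4 - pole_coeff st 4 1 * al21 st * t))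
        - (al21 st * t)^2 * fls_residue (ham_weight p2 p3 p4 p5 *
            (pole_series p2 p3 p4 p5 (pb st 1) (pa st 1) * pole_series p2 p3 p4 p5 (pb st 1) (pa st 1)))" for t
    using Ham_lower[of "st\<lparr>be21 := t\<rparr>"] assms
    by (simp add: in_Z_def nondegenerate_def lower_config_def pole_coeff_def mult.assoc del: fls_residue_def)
  then have "((\<lambda>t. Ham p2 p3 p4 p5 (st\<lparr>be21 := t\<rparr>)) has_field_derivative
      - (pole_coeff st 4 1 * al21 st) * adot (pa st) (kap st) 4) (at 0)"
    using has_field_derivative_Hr_kap_linear assms(2) by (simp add: nondegenerate_def)
  then show ?thesis
    using assms(1) unfolding pole_coeff_swap[of st 4 1] by (simp add: in_Z_def pole_coeff_def mult_ac)
qed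

text \<open>The branch data bf, U are not needed: on Z the Hamiltonian does not depend on the b_s.\<close>
theorem proposition1:
  fixes p2 p3 p4 p5 :: complex and st :: phase
    and bf :: "nat \<Rightarrow> complex \<Rightarrow> complex" and U :: "nat \<Rightarrow> complex set"
  assumes distinct_a: "\<forall>s\<in>{1..4::nat}. \<forall>t\<in>{1..4}. s \<noteq> t \<longrightarrow> pa st s \<noteq> pa st t"
    and branch: "\<forall>s\<in>{1..4::nat}. open (U s) \<and> pa st s \<in> U s \<and> bf s holomorphic_on U s
                   \<and> (\<forall>x\<in>U s. (bf s x)^2 = Pc p2 p3 p4 p5 x) \<and> pb st s = bf s (pa st s)"
    and Z: "al11 st = 0" "al22 st = 0" "be11 st = 0" "be21 st = 0" "be12 st = 0"
           "be22 st = 0" "be23 st = 0" "be14 st = 0"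
    and defined: "\<exists>!A. lax_eqs st (fst A) (snd A)"
  shows
    "(((\<lambda>t. Ham p2 p3 p4 p5 (st\<lparr>be11 := t\<rparr>)) has_field_derivative 0) (at (be11 st))) \<and>
     (((\<lambda>t. Ham p2 p3 p4 p5 (st\<lparr>be22 := t\<rparr>)) has_field_derivative 0) (at (be22 st))) \<and>
     (((\<lambda>t. Ham p2 p3 p4 p5 (st\<lparr>al11 := t\<rparr>)) has_field_derivative 0) (at (al11 st))) \<and>
     (((\<lambda>t. Ham p2 p3 p4 p5 (st\<lparr>al21 := t\<rparr>)) has_field_derivative 0) (at (al21 st))) \<and>
     (((\<lambda>t. Ham p2 p3 p4 p5 (st\<lparr>al12 := t\<rparr>)) has_field_derivative 0) (at (al12 st))) \<and>
     (((\<lambda>t. Ham p2 p3 p4 p5 (st\<lparr>al22 := t\<rparr>)) has_field_derivative 0) (at (al22 st))) \<and>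
     (Ham p2 p3 p4 p5 st = Hr (pa st) (kap st)) \<and>
     (\<forall>s\<in>{1..4::nat}. ((\<lambda>t. Ham p2 p3 p4 p5 (st\<lparr>kap := (kap st)(s := t)\<rparr>))
        has_field_derivative adot (pa st) (kap st) s) (at (kap st s))) \<and>
     (\<forall>s\<in>{1..4::nat}. ((\<lambda>t. Ham p2 p3 p4 p5 (st\<lparr>pa := (pa st)(s := t), pb := (pb st)(s := bf s t)\<rparr>))
        has_field_derivative - kdot (pa st) (kap st) s) (at (pa st s))) \<and>
     (((\<lambda>t. Ham p2 p3 p4 p5 (st\<lparr>be12 := t\<rparr>)) has_field_derivative
        al12 st * (pb st 2 + pb st 3) / (pa st 2 - pa st 3) * adot (pa st) (kap st) 3) (at (be12 st))) \<and>
     (((\<lambda>t. Ham p2 p3 p4 p5 (st\<lparr>be21 := t\<rparr>)) has_field_derivative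
        al21 st * (pb st 1 + pb st 4) / (pa st 1 - pa st 4) * adot (pa st) (kap st) 4) (at (be21 st))) \<and>
     (\<forall>s\<in>{1..4::nat}. ((\<lambda>t. Hr (pa st) ((kap st)(s := t)))
        has_field_derivative adot (pa st) (kap st) s) (at (kap st s))) \<and>
     (\<forall>s\<in>{1..4::nat}. ((\<lambda>t. Hr ((pa st)(s := t)) (kap st))
        has_field_derivative - kdot (pa st) (kap st) s) (at (pa st s)))"
proof -
  have pairs: "pa st 1 \<noteq> pa st 4" "pa st 2 \<noteq> pa st 3"
    using distinct_a by auto
  have Z_st: "in_Z st"
    using Z by (simp add: in_Z_def)
  have nd: "nondegenerate st"
    using pairs gauge_alpha_nonzero_if_unique[OF defined Z(1,2)] by (simp add: nondegenerate_def)
  show ?thesis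
    by (intro conjI ballI has_field_derivative_Ham_constant_on_Z[OF Z_st nd] Ham_eq_Hr_on_Z[OF Z_st nd]
        has_field_derivative_Ham_kap_on_Z[OF Z_st nd] has_field_derivative_Ham_pa_on_Z[OF Z_st nd]
        has_field_derivative_Ham_be12_on_Z[OF Z_st nd] has_field_derivative_Ham_be21_on_Z[OF Z_st nd]
        has_field_derivative_Hr_kap[OF _ pairs] has_field_derivative_Hr_pa[OF _ pairs])
qed

end
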